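(* Let $M$ be a nontrivial monoid with identity $e$, $X$ a set and $\tau,\tau'$ topologies on $X$ with $\tau'$ strictly finer than $\tau$. In $\mathscr{C}=\mathbf{Top}$, let $\alpha$ be the partial action datum of $M$ on $(X,\tau)$ given by $\alpha(e)=[(X,\tau),\mathrm{id}_X,\mathrm{id}_X]$ and $\alpha(m)=[(X,\tau'),\mathrm{id}_X,\mathrm{id}_X]$ for $m\neq e$ (where $\mathrm{id}_X\colon(X,\tau')\to(X,\tau)$ is the continuous identity map). Then $\alpha$ is a strong partial action of $M$ on $(X,\tau)$, but $\alpha$ is not the restriction of any global action of $M$ on any space $(Y,\upsilon)$ via any monomorphism $\iota\colon(X,\tau)\to(Y,\upsilon)$ in $\mathbf{Top}$.
   Context: A partial action datum of $M$ on an object $X$ of a category with pullbacks $\mathscr{C}$ assigns to each $m\in M$ an isomorphism class of spans $[\operatorname{dom}\alpha_m,\iota_m,\alpha_m]$ with $\iota_m\colon\operatorname{dom}\alpha_m\to X$ a monomorphism and $\alpha_m\colon\operatorname{dom}\alpha_m\to X$ (isomorphism of spans: an isomorphism of apexes commuting with both legs). For $m,n\in M$, let $\alpha_m^{-1}(\operatorname{dom}\alpha_n)$ be a pullback of $\alpha_m$ and $\iota_n$ with projections $\hat\iota^m_n$ to $\operatorname{dom}\alpha_m$ and $\hat\alpha^n_m$ to $\operatorname{dom}\alpha_n$, and $\operatorname{dom}\alpha_m\cap\operatorname{dom}\alpha_k$ a pullback of $\iota_m$ and $\iota_k$ with projections $\pi^{m,k}_1$ to $\operatorname{dom}\alpha_m$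 and $\pi^{m,k}_2$ to $\operatorname{dom}\alpha_k$. A strong partial action is a datum with $\alpha(e)=[X,\mathrm{id}_X,\mathrm{id}_X]$ such that for all $m,n$ there is an isomorphism $\theta\colon\alpha_m^{-1}(\operatorname{dom}\alpha_n)\to\operatorname{dom}\alpha_m\cap\operatorname{dom}\alpha_{nm}$ with $\iota_{nm}\circ\pi^{m,nm}_2\circ\theta=\iota_m\circ\hat\iota^m_n$ and $\alpha_{nm}\circ\pi^{m,nm}_2\circ\theta=\alpha_n\circ\hat\alpha^n_m$. A global action of $M$ on $Y$ is a family of morphisms $\beta_m\colon Y\to Y$ with $\beta_e=\mathrm{id}_Y$, $\beta_n\circ\beta_m=\beta_{nm}$. Given a global action $\beta$ on $Y$ and a monomorphism $\iota\colon X\to Y$, the restriction of $\beta$ via $\iota$ is the datum $\alpha$ on $X$ such that for each $m$ the square $\beta_m\circ\iota\circ\iota_m=\iota\circ\alpha_m$ is a pullback. *)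

theory Defs
  imports "HOL-Analysis.Analysis"
begin

definition pb :: "'a topology \<Rightarrow> 'b topology \<Rightarrow> ('a \<Rightarrow> 'c) \<Rightarrow> ('b \<Rightarrow> 'c) \<Rightarrow> ('a \<times> 'b) topology" where
  "pb A B f g = subtopology (prod_topology A B) {(a, b). f a = g b}"

text \<open>Monomorphisms in Top are exactly the injective continuous maps.\<close>
definition top_mono :: "'a topology \<Rightarrow> 'b topology \<Rightarrow> ('a \<Rightarrow> 'b) \<Rightarrow> bool" where
  "top_mono A B f \<longleftrightarrow> continuous_map A B f \<and> inj_on f (topspace A)"

text \<open>A partial action datum of the monoid 'm on the space X: for each m a
  representative span (D m, inc m, act m) with inc m a monomorphism.\<close>
definition partial_action_datum ::
  "'a topology \<Rightarrow> ('m \<Rightarrow> 'd topology) \<Rightarrow> ('m \<Rightarrow> 'd \<Rightarrow> 'a) \<Rightarrow> ('m \<Rightarrow> 'd \<Rightarrow> 'a) \<Rightarrow> bool" where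
  "partial_action_datum X D inc act \<longleftrightarrow>
     (\<forall>m. top_mono (D m) X (inc m) \<and> continuous_map (D m) X (act m))"

text \<open>Strong partial action (pullbacks taken as the canonical ones; the
  alpha(e) condition says the span (D 1, inc 1, act 1) is isomorphic to (X, id, id)).\<close>
definition strong_partial_action ::
  "'a topology \<Rightarrow> ('m::monoid_mult \<Rightarrow> 'd topology) \<Rightarrow> ('m \<Rightarrow> 'd \<Rightarrow> 'a) \<Rightarrow> ('m \<Rightarrow> 'd \<Rightarrow> 'a) \<Rightarrow> bool" where
  "strong_partial_action X D inc act \<longleftrightarrow>
     partial_action_datum X D inc act \<and>
     (\<exists>h. homeomorphic_map (D 1) X h \<and>
          (\<forall>x\<in>topspace (D 1). h x = inc 1 x \<and> h x = act 1 x)) \<and>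
     (\<forall>m n. \<exists>\<theta>.
        homeomorphic_map (pb (D m) (D n) (act m) (inc n))
                         (pb (D m) (D (n * m)) (inc m) (inc (n * m))) \<theta> \<and>
        (\<forall>p\<in>topspace (pb (D m) (D n) (act m) (inc n)).
           inc (n * m) (snd (\<theta> p)) = inc m (fst p) \<and>
           act (n * m) (snd (\<theta> p)) = act n (snd p)))"

definition global_action :: "'y topology \<Rightarrow> ('m::monoid_mult \<Rightarrow> 'y \<Rightarrow> 'y) \<Rightarrow> bool" where
  "global_action Y \<beta> \<longleftrightarrow>
     (\<forall>m. continuous_map Y Y (\<beta> m)) \<and>
     (\<forall>y\<in>topspace Y. \<beta> 1 y = y) \<and>
     (\<forall>m n. \<forall>y\<in>topspace Y. \<beta> n (\<beta> m y) = \<beta> (n * m) y)"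

definition is_pullback_square ::
  "'a topology \<Rightarrow> 'b topology \<Rightarrow> 'c topology \<Rightarrow> ('a \<Rightarrow> 'c) \<Rightarrow> ('b \<Rightarrow> 'c)
   \<Rightarrow> 'p topology \<Rightarrow> ('p \<Rightarrow> 'a) \<Rightarrow> ('p \<Rightarrow> 'b) \<Rightarrow> bool" where
  "is_pullback_square A B C f g P p1 p2 \<longleftrightarrow>
     continuous_map A C f \<and> continuous_map B C g \<and>
     continuous_map P A p1 \<and> continuous_map P B p2 \<and>
     (\<forall>x\<in>topspace P. f (p1 x) = g (p2 x)) \<and>
     homeomorphic_map P (pb A B f g) (\<lambda>x. (p1 x, p2 x))"

definition is_restriction ::
  "'a topology \<Rightarrow> ('m::monoid_mult \<Rightarrow> 'd topology) \<Rightarrow> ('m \<Rightarrow> 'd \<Rightarrow> 'a) \<Rightarrow> ('m \<Rightarrow> 'd \<Rightarrow> 'a)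
   \<Rightarrow> 'y topology \<Rightarrow> ('m \<Rightarrow> 'y \<Rightarrow> 'y) \<Rightarrow> ('a \<Rightarrow> 'y) \<Rightarrow> bool" where
  "is_restriction X D inc act Y \<beta> \<iota> \<longleftrightarrow>
     partial_action_datum X D inc act \<and>
     (\<forall>m. is_pullback_square X X Y (\<lambda>x. \<beta> m (\<iota> x)) \<iota> (D m) (inc m) (act m))"

end

theory Submission
  imports Defs
begin

text \<open>All spans of the datum have identity legs, and a pullback along an identity leg
  is a diagonal; a diagonal taken in a product with a coarser second factor carries the
  topology of the finer one, which makes the datum a strong partial action. Conversely,
  if the datum were a restriction, commutativity of each square would force
  \<open>\<beta>\<^sub>m \<circ> \<iota> = \<iota>\<close> on \<open>X\<close>, so every domain \<open>D m\<close> would be a pullback of the same cospan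
  \<open>(\<iota>, \<iota>)\<close> with the same comparison map \<open>x \<mapsto> (x, x)\<close>; hence all domains carry the same
  topology, contradicting \<open>\<tau>' \<noteq> \<tau>\<close>.\<close>

lemma pb_id_id_eq_diagonal: "pb A B id id = subtopology (prod_topology A B) {(a, b). a = b}"
  by (simp add: pb_def)

lemma continuous_map_fst_snd_diagonal:
  "continuous_map (pb A B id id) A fst" "continuous_map (pb A B id id) B snd"
  unfolding pb_id_id_eq_diagonal
  by (metis continuous_map_fst continuous_map_from_subtopology,
      metis continuous_map_snd continuous_map_from_subtopology)

lemma pb_id_id_coarser_right:
  assumes "topspace B = topspace A" and "\<And>U. openin B U \<Longrightarrow> openin A U"
  shows "pb A B id id = pb A A id id"
proof -
  have coarser: "continuous_map A B id"
    using assms topology_finer_continuous_id by metis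
  have on_diagonal: "snd p = fst p" if "p \<in> topspace (pb A C id id)" for C p
    using that by (auto simp: pb_id_id_eq_diagonal)
  have "continuous_map (pb A B id id) A snd"
    by (rule continuous_map_eq[OF continuous_map_fst_snd_diagonal(1)]) (simp add: on_diagonal)
  then have into_AA: "continuous_map (pb A B id id) (pb A A id id) id"
    using continuous_map_fst_snd_diagonal(1)
    by (auto simp: pb_id_id_eq_diagonal continuous_map_in_subtopology continuous_map_pairwise o_def)
  have "continuous_map (pb A A id id) B snd"
    using continuous_map_compose[OF continuous_map_fst_snd_diagonal(2) coarser] by (simp add: o_def)
  then have into_AB: "continuous_map (pb A A id id) (pb A B id id) id"
    using continuous_map_fst_snd_diagonal(1)
    by (auto simp: pb_id_id_eq_diagonal continuous_map_in_subtopology continuous_map_pairwise o_def)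
  have "homeomorphic_map (pb A B id id) (pb A A id id) id"
    using into_AA into_AB by (auto simp: homeomorphic_map_maps homeomorphic_maps_def)
  then show ?thesis by simp
qed

lemma homeomorphic_map_same_map_imp_eq:
  assumes "topspace A = topspace B"
    and "homeomorphic_map A P f" and "homeomorphic_map B P f"
  shows "A = B"
  using assms by (simp add: topology_eq homeomorphic_map_openness_eq)

lemma pb_cong_left:
  assumes "\<And>x. x \<in> topspace A \<Longrightarrow> f x = f' x"
  shows "pb A B f g = pb A B f' g"
proof -
  have "topspace (prod_topology A B) \<inter> {(a, b). f a = g b}
      = topspace (prod_topology A B) \<inter> {(a, b). f' a = g b}"
    using assms by auto
  then show ?thesis
    unfolding pb_def by (metis subtopology_restrict)
qed

lemma strong_partial_action_of_finer_topology:
  fixes \<tau> \<tau>' :: "'a topology"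
  assumes "topspace \<tau>' = topspace \<tau>" and "\<And>U. openin \<tau> U \<Longrightarrow> openin \<tau>' U"
  shows "strong_partial_action \<tau> (\<lambda>m::'m::monoid_mult. if m = 1 then \<tau> else \<tau>') (\<lambda>m. id) (\<lambda>m. id)"
proof -
  define D where "D = (\<lambda>m::'m. if m = 1 then \<tau> else \<tau>')"
  have topspace_D: "topspace (D m) = topspace \<tau>" for m
    using assms(1) by (simp add: D_def)
  have open_D: "openin (D m) U \<Longrightarrow> openin \<tau>' U" for m U
    using assms(2) by (cases "m = 1") (simp_all add: D_def)
  have "continuous_map \<tau>' \<tau> id"
    using assms topology_finer_continuous_id[of \<tau> \<tau>'] by simp
  then have "continuous_map (D m) \<tau> id" for m
    by (simp add: D_def)
  then have datum: "partial_action_datum \<tau> D (\<lambda>m. id) (\<lambda>m. id)"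
    by (simp add: partial_action_datum_def top_mono_def)
  have pb_eq: "pb (D m) (D n) id id = pb (D m) (D (n * m)) id id" for m n
  proof (cases "m = 1")
    case False
    then have "D m = \<tau>'" by (simp add: D_def)
    then show ?thesis
      using pb_id_id_coarser_right[of "D k" \<tau>' for k] topspace_D open_D assms(1) by metis
  qed simp
  show ?thesis
    unfolding strong_partial_action_def D_def[symmetric]
    using datum pb_eq by (auto intro!: exI[of _ id] simp: D_def pb_id_id_eq_diagonal)
qed

lemma restriction_of_identity_spans_constant:
  assumes "is_restriction X D (\<lambda>m. id) (\<lambda>m. id) Y \<beta> \<iota>"
    and "\<And>m. topspace (D m) = topspace X"
  shows "D m = D n"
proof -
  have "homeomorphic_map (D k) (pb X X \<iota> \<iota>) (\<lambda>x. (x, x))" for k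
  proof -
    have "is_pullback_square X X Y (\<lambda>x. \<beta> k (\<iota> x)) \<iota> (D k) id id"
      using assms(1) by (simp add: is_restriction_def)
    then have commutes: "\<And>x. x \<in> topspace X \<Longrightarrow> \<beta> k (\<iota> x) = \<iota> x"
      and "homeomorphic_map (D k) (pb X X (\<lambda>x. \<beta> k (\<iota> x)) \<iota>) (\<lambda>x. (x, x))"
      using assms(2) by (simp_all add: is_pullback_square_def)
    moreover have "pb X X (\<lambda>x. \<beta> k (\<iota> x)) \<iota> = pb X X \<iota> \<iota>"
      using commutes by (rule pb_cong_left)
    ultimately show ?thesis by simp
  qed
  then show ?thesis
    using homeomorphic_map_same_map_imp_eq assms(2) by metis
qed

theorem mainTheorem18:
  fixes \<tau> \<tau>' :: "'a topology" and X :: "'a set"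
  assumes nontriv: "\<exists>m::'m::monoid_mult. m \<noteq> 1"
    and "topspace \<tau> = X" and "topspace \<tau>' = X"
    and "\<forall>U. openin \<tau> U \<longrightarrow> openin \<tau>' U" and "\<tau>' \<noteq> \<tau>"
  shows "strong_partial_action \<tau> (\<lambda>m::'m. if m = 1 then \<tau> else \<tau>') (\<lambda>m. id) (\<lambda>m. id)
       \<and> \<not> (\<exists>(Y :: 'y topology) \<beta> \<iota>. global_action Y \<beta> \<and> top_mono \<tau> Y \<iota> \<and>
              is_restriction \<tau> (\<lambda>m::'m. if m = 1 then \<tau> else \<tau>') (\<lambda>m. id) (\<lambda>m. id) Y \<beta> \<iota>)"
proof
  show "strong_partial_action \<tau> (\<lambda>m::'m. if m = 1 then \<tau> else \<tau>') (\<lambda>m. id) (\<lambda>m. id)"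
    using assms(2-4) by (intro strong_partial_action_of_finer_topology) auto
next
  show "\<not> (\<exists>(Y :: 'y topology) \<beta> \<iota>. global_action Y \<beta> \<and> top_mono \<tau> Y \<iota> \<and>
              is_restriction \<tau> (\<lambda>m::'m. if m = 1 then \<tau> else \<tau>') (\<lambda>m. id) (\<lambda>m. id) Y \<beta> \<iota>)"
  proof
    assume "\<exists>(Y :: 'y topology) \<beta> \<iota>. global_action Y \<beta> \<and> top_mono \<tau> Y \<iota> \<and>
              is_restriction \<tau> (\<lambda>m::'m. if m = 1 then \<tau> else \<tau>') (\<lambda>m. id) (\<lambda>m. id) Y \<beta> \<iota>"
    then obtain Y :: "'y topology" and \<beta> \<iota>
      where restriction: "is_restriction \<tau> (\<lambda>m::'m. if m = 1 then \<tau> else \<tau>') (\<lambda>m. id) (\<lambda>m. id) Y \<beta> \<iota>"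
      by blast
    obtain m :: 'm where "m \<noteq> 1"
      using nontriv by blast
    have "(if m = 1 then \<tau> else \<tau>') = (if (1::'m) = 1 then \<tau> else \<tau>')"
      using restriction assms(2,3) by (intro restriction_of_identity_spans_constant) auto
    with \<open>m \<noteq> 1\<close> \<open>\<tau>' \<noteq> \<tau>\<close> show False
      by simp
  qed
qed

end
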